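(* Let $f:\mathbb{R}^n\times\mathbb{R}^p\times\mathbb{R}^q\to\mathbb{R}^n$ be continuously differentiable, let $N:\mathbb{R}^n\to\mathbb{R}^p$ be a neural network controller, and $f^{\mathsf c}(x,w)=f(x,N(x),w)$. Let $T\in\mathbb{R}^{n\times n}$ be invertible, $\Phi(x)=Tx$, and define the transformed system $\dot y=g^{\mathsf c}(y,w):=Tf(T^{-1}y,N'(y),w)$ with $N'(y):=N(T^{-1}y)$. Fix an interval $[\underline z,\overline z]\subseteq\mathbb{R}^n$ and $[\underline w,\overline w]\subseteq\mathbb{R}^q$. Let $(C,\underline d,\overline d)$ be a local affine bound of $N$ on $[\underline z,\overline z]$ and $[\underline u,\overline u]$ with $\underline u=C^+\underline z+C^-\overline z+\underline d$, $\overline u=C^-\underline z+C^+\overline z+\overline d$. Let $[\mathsf J_x]\in\mathbb{IR}^{n\times n}$, $[\mathsf J_u]\in\mathbb{IR}^{n\times p}$, $[\mathsf J_w]\in\mathbb{IR}^{n\times q}$ be interval matrices such that $D_xf(x,u,w)\in[\mathsf J_x]$, $D_uf(x,u,w)\in[\mathsf J_u]$, $D_wf(x,u,w)\in[\mathsf J_w]$ for all $(x,u,w)\in[\underline z,\overline z]\times[\underline u,\overline u]\times[\underline w,\overline w]$. Fix $\mathring x\in[\underline z,\overline z]$, $\mathring u=N(\mathring x)$, $\mathring w\in[\underline w,\overline w]$, and let $[\mathsf R]:=-[\mathsf J_x]\mathring x-[\mathsf J_u]\mathring u+[\mathsf J_w]([\underline w,\overline w]-\mathring w)+f(\mathring x,\mathring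 u,\mathring w)$ (interval arithmetic). For an interval $[\underline y,\overline y]$ let $(C',\underline d',\overline d')$ be a local affine bound of $N'$ on $[\underline y,\overline y]$, and define $$[\mathsf G^{\mathsf c}(\underline y,\overline y,\underline w,\overline w)]:=T\Big(\big([\mathsf J_x]+[\mathsf J_u](C'T)\big)\big(T^{-1}[\underline y,\overline y]\big)\Big)+T\big([\mathsf J_u][\underline d',\overline d']\big)+T[\mathsf R],$$ evaluated in interval arithmetic (real matrices/vectors treated as degenerate intervals). Then $\mathsf G^{\mathsf c}$ is a $\Phi([\underline z,\overline z])$-localized inclusion function for $g^{\mathsf c}$: for every interval $[\underline y,\overline y]\subseteq\Phi([\underline z,\overline z])=\{Tx:x\in[\underline z,\overline z]\}$, every $y\in[\underline y,\overline y]$ and every $w\in[\underline w,\overline w]$, $g^{\mathsf c}(y,w)\in[\mathsf G^{\mathsf c}(\underline y,\overline y,\underline w,\overline w)]$.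
   Context: Interval arithmetic: $\mathbb{IR}^{m}$ (resp. $\mathbb{IR}^{m\times k}$) denotes intervals (interval matrices) $[\underline A,\overline A]=\{A:\underline A\le A\le\overline A\}$ entrywise. Operations: $[\underline a,\overline a]+[\underline b,\overline b]=[\underline a+\underline b,\overline a+\overline b]$ (entrywise for vectors/matrices); $[\underline a,\overline a]\cdot[\underline b,\overline b]=[\min S,\max S]$ with $S=\{\underline a\underline b,\underline a\overline b,\overline a\underline b,\overline a\overline b\}$; $([A][B])_{ij}=\sum_k[A]_{ik}\cdot[B]_{kj}$. A real number $c$ is the interval $[c,c]$; subtracting a real vector shifts the interval. Neural network: $N(x)=W^{(k)}\xi^{(k)}+b^{(k)}$, $\xi^{(0)}=x$, $\xi^{(i)}=\phi^{(i-1)}(W^{(i-1)}\xi^{(i-1)}+b^{(i-1)})$, with diagonal activations satisfying $0\le(\phi_j(a)-\phi_j(b))/(a-b)\le1$. Local affine bound: for an interval $[\underline\xi,\overline\xi]$, a tuple $(C,\underline d,\overline d)$ with $Cx+\underline d\le N(x)\le Cx+\overline d$ for every $x\in[\underline\xi,\overline\xi]$ (such bounds are assumed available, e.g. from CROWN). For a matrix $C$, $C^+_{ij}=\max(C_{ij},0)$ and $C^-=C-C^+$. An $\mathcal S$-localized inclusion function $\mathsf G$ for $g^{\mathsf c}$ is one whose interval output contains $g^{\mathsf c}(y,w)$ for all $y\in[\underline y,\overline y]$, $w\in[\underline w,\overline w]$, whenever $[\underline y,\overline y]\subseteq\mathcal S$. *)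

theory Defs
  imports "HOL-Analysis.Analysis"
begin

text \<open>Intervals (of reals, real vectors, real matrices) are represented as pairs
  (lower, upper); membership is w.r.t. the componentwise order.\<close>

type_synonym 'a ivl = "'a \<times> 'a"

definition imem :: "'a::order \<Rightarrow> 'a ivl \<Rightarrow> bool" where
  "imem x A \<longleftrightarrow> fst A \<le> x \<and> x \<le> snd A"

definition pt :: "'a \<Rightarrow> 'a ivl" where
  "pt x = (x, x)"

definition iadd :: "'a::plus ivl \<Rightarrow> 'a ivl \<Rightarrow> 'a ivl" where
  "iadd A B = (fst A + fst B, snd A + snd B)"

definition ineg :: "'a::uminus ivl \<Rightarrow> 'a ivl" where
  "ineg A = (- snd A, - fst A)"

definition imul :: "real ivl \<Rightarrow> real ivl \<Rightarrow> real ivl" where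
  "imul A B =
     (let a1 = fst A; a2 = snd A; b1 = fst B; b2 = snd B in
      (min (min (a1*b1) (a1*b2)) (min (a2*b1) (a2*b2)),
       max (max (a1*b1) (a1*b2)) (max (a2*b1) (a2*b2))))"

definition imatmul :: "(real^'k^'m) ivl \<Rightarrow> (real^'l^'k) ivl \<Rightarrow> (real^'l^'m) ivl" where
  "imatmul A B =
     ((\<chi> i j. \<Sum>k\<in>UNIV. fst (imul (fst A $ i $ k, snd A $ i $ k) (fst B $ k $ j, snd B $ k $ j))),
      (\<chi> i j. \<Sum>k\<in>UNIV. snd (imul (fst A $ i $ k, snd A $ i $ k) (fst B $ k $ j, snd B $ k $ j))))"

definition imatvec :: "(real^'k^'m) ivl \<Rightarrow> (real^'k) ivl \<Rightarrow> (real^'m) ivl" where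
  "imatvec A v =
     ((\<chi> i. \<Sum>k\<in>UNIV. fst (imul (fst A $ i $ k, snd A $ i $ k) (fst v $ k, snd v $ k))),
      (\<chi> i. \<Sum>k\<in>UNIV. snd (imul (fst A $ i $ k, snd A $ i $ k) (fst v $ k, snd v $ k))))"

definition mpos :: "real^'k^'m \<Rightarrow> real^'k^'m" where
  "mpos C = (\<chi> i j. max (C $ i $ j) 0)"

definition mneg :: "real^'k^'m \<Rightarrow> real^'k^'m" where
  "mneg C = C - mpos C"

definition local_affine_bound ::
  "(real^'n \<Rightarrow> real^'p) \<Rightarrow> real^'n \<Rightarrow> real^'n \<Rightarrow> real^'n^'p \<Rightarrow> real^'p \<Rightarrow> real^'p \<Rightarrow> bool" where
  "local_affine_bound N lo hi C dl du \<longleftrightarrow>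
     (\<forall>x. lo \<le> x \<and> x \<le> hi \<longrightarrow> C *v x + dl \<le> N x \<and> N x \<le> C *v x + du)"

definition Dx :: "(((real^'n) \<times> (real^'p) \<times> (real^'q)) \<Rightarrow>\<^sub>L (real^'n)) \<Rightarrow> real^'n^'n" where
  "Dx L = matrix (\<lambda>h. blinfun_apply L (h, 0, 0))"

definition Du :: "(((real^'n) \<times> (real^'p) \<times> (real^'q)) \<Rightarrow>\<^sub>L (real^'n)) \<Rightarrow> real^'p^'n" where
  "Du L = matrix (\<lambda>h. blinfun_apply L (0, h, 0))"

definition Dw :: "(((real^'n) \<times> (real^'p) \<times> (real^'q)) \<Rightarrow>\<^sub>L (real^'n)) \<Rightarrow> real^'q^'n" where
  "Dw L = matrix (\<lambda>h. blinfun_apply L (0, 0, h))"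

end

theory Submission imports Defs begin

text \<open>By the mean value theorem applied to each component separately, the closed-loop
  vector field satisfies f(x,N(x),w) = f(x0,u0,w0) + Ax(x-x0) + Au(u-u0) + Aw(w-w0), where row i
  of the real matrices Ax, Au, Aw is a row of the Jacobians at some point of the box, so
  Ax, Au, Aw lie in the interval Jacobians. Substituting x = T\<inverse>y and writing
  u = C'y + d with d in [dl', du'] turns T f into
  T((Ax + Au C'T)(T\<inverse> y)) + T(Au d) + T(-Ax x0 - Au u0 + Aw(w - w0) + f(x0,u0,w0)),
  and every operation in this expression is monotone for interval inclusion.\<close>

lemma imem_pt: "imem x (pt x)"
  by (simp add: imem_def pt_def)

lemma imem_iadd: "imem (x::'a::ordered_ab_group_add) A \<Longrightarrow> imem y B \<Longrightarrow> imem (x + y) (iadd A B)"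
  by (auto simp: imem_def iadd_def add_mono)

lemma imem_ineg: "imem (x::'a::ordered_ab_group_add) A \<Longrightarrow> imem (- x) (ineg A)"
  by (auto simp: imem_def ineg_def)

lemma mult_between_min_max:
  fixes a b b1 b2 :: real
  assumes "b1 \<le> b" "b \<le> b2"
  shows "min (a * b1) (a * b2) \<le> a * b \<and> a * b \<le> max (a * b1) (a * b2)"
proof (cases "a \<ge> 0")
  case True
  then have "a * b1 \<le> a * b" "a * b \<le> a * b2" using assms by (auto intro: mult_left_mono)
  then show ?thesis by linarith
next
  case False
  then have "a * b2 \<le> a * b" "a * b \<le> a * b1" using assms by (auto intro: mult_left_mono_neg)
  then show ?thesis by linarith
qed

lemma imem_imul:
  fixes a b :: real
  assumes "imem a A" "imem b B"
  shows "imem (a * b) (imul A B)"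
proof -
  obtain a1 a2 b1 b2 where AB: "A = (a1, a2)" "B = (b1, b2)" by fastforce
  with assms have a: "a1 \<le> a" "a \<le> a2" and b: "b1 \<le> b" "b \<le> b2" by (auto simp: imem_def)
  have "min (a * b1) (a * b2) \<le> a * b \<and> a * b \<le> max (a * b1) (a * b2)"
    using mult_between_min_max b by blast
  moreover have "min (a1 * b1) (a2 * b1) \<le> a * b1 \<and> a * b1 \<le> max (a1 * b1) (a2 * b1)"
    using mult_between_min_max[of a1 a a2 b1] a by (simp add: mult.commute)
  moreover have "min (a1 * b2) (a2 * b2) \<le> a * b2 \<and> a * b2 \<le> max (a1 * b2) (a2 * b2)"
    using mult_between_min_max[of a1 a a2 b2] a by (simp add: mult.commute)
  ultimately show ?thesis
    unfolding AB imem_def imul_def Let_def by (simp add: min_le_iff_disj le_max_iff_disj) linarith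
qed

lemma imem_sum:
  fixes a :: "'i \<Rightarrow> 'a::ordered_comm_monoid_add"
  assumes "\<And>k. k \<in> S \<Longrightarrow> imem (a k) (A k)"
  shows "imem (\<Sum>k\<in>S. a k) (\<Sum>k\<in>S. fst (A k), \<Sum>k\<in>S. snd (A k))"
  using assms by (auto simp: imem_def intro: sum_mono)

lemma imem_vec_iff: "imem (x::'a::order^'n) A \<longleftrightarrow> (\<forall>i. imem (x $ i) (fst A $ i, snd A $ i))"
  by (auto simp: imem_def less_eq_vec_def)

lemma imem_imatvec:
  assumes "imem (A::real^'k^'m) AI" "imem v VI"
  shows "imem (A *v v) (imatvec AI VI)"
  using assms
  by (auto simp: imem_vec_iff imatvec_def matrix_vector_mult_def intro!: imem_sum imem_imul)

lemma imem_imatmul: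
  assumes "imem (A::real^'k^'m) AI" "imem (B::real^'l^'k) BI"
  shows "imem (A ** B) (imatmul AI BI)"
  using assms
  by (auto simp: imem_vec_iff imatmul_def matrix_matrix_mult_def intro!: imem_sum imem_imul)

lemma blinfun_apply_eq_Dx_Du_Dw:
  fixes L :: "((real^'n) \<times> (real^'p) \<times> (real^'q)) \<Rightarrow>\<^sub>L (real^'n)"
  shows "blinfun_apply L (h, k, l) = Dx L *v h + Du L *v k + Dw L *v l"
proof -
  have "linear (\<lambda>h. blinfun_apply L (h, 0, 0))" "linear (\<lambda>k. blinfun_apply L (0, k, 0))"
    "linear (\<lambda>l. blinfun_apply L (0, 0, l))"
    by (auto intro!: linearI simp: blinfun.add_right[symmetric] blinfun.scaleR_right[symmetric])
  then have "Dx L *v h = blinfun_apply L (h, 0, 0)" "Du L *v k = blinfun_apply L (0, k, 0)"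
    "Dw L *v l = blinfun_apply L (0, 0, l)"
    unfolding Dx_def Du_def Dw_def by (simp_all add: matrix_vector_mul)
  moreover have "blinfun_apply L (h, k, l)
      = blinfun_apply L (h, 0, 0) + blinfun_apply L (0, k, 0) + blinfun_apply L (0, 0, l)"
    by (simp flip: blinfun.add_right)
  ultimately show ?thesis by simp
qed

lemma mean_value_vec_component:
  fixes f :: "'a::real_normed_vector \<Rightarrow> real^'n"
  assumes "convex S" "p0 \<in> S" "p \<in> S"
    and deriv: "\<And>z. z \<in> S \<Longrightarrow> (f has_derivative f' z) (at z)"
  obtains z where "z \<in> S" "f p $ i - f p0 $ i = f' z (p - p0) $ i"
proof -
  define \<gamma> where "\<gamma> t = p0 + t *\<^sub>R (p - p0)" for t :: real
  have \<gamma>_in: "\<gamma> t \<in> S" if "t \<in> {0..1}" for t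
    using convexD_alt[OF assms(1,2,3), of t] that unfolding \<gamma>_def by (simp add: algebra_simps)
  have "((\<lambda>t. f (\<gamma> t) $ i) has_derivative (\<lambda>h. f' (\<gamma> t) (h *\<^sub>R (p - p0)) $ i)) (at t within {0..1})"
    if "t \<in> {0..1}" for t
  proof -
    have "(\<gamma> has_derivative (\<lambda>h. h *\<^sub>R (p - p0))) (at t within {0..1})"
      unfolding \<gamma>_def by (auto intro!: derivative_eq_intros)
    from has_derivative_compose[OF this deriv[OF \<gamma>_in[OF that]]]
    show ?thesis
      by (rule bounded_linear.has_derivative[OF bounded_linear_vec_nth, unfolded o_def])
  qed
  then obtain t where "t \<in> {0..1}" "f (\<gamma> 1) $ i - f (\<gamma> 0) $ i = f' (\<gamma> t) ((1 - 0) *\<^sub>R (p - p0)) $ i"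
    using mvt_very_simple[of 0 1 "\<lambda>t. f (\<gamma> t) $ i" "\<lambda>t h. f' (\<gamma> t) (h *\<^sub>R (p - p0)) $ i"] by auto
  moreover have "\<gamma> 0 = p0" "\<gamma> 1 = p" by (simp_all add: \<gamma>_def)
  ultimately show thesis using \<gamma>_in by (intro that[of "\<gamma> t"]) auto
qed

lemma mean_value_interval_jacobians:
  fixes f :: "(real^'n) \<times> (real^'p) \<times> (real^'q) \<Rightarrow> real^'n"
  assumes "convex S" "(x0, u0, w0) \<in> S" "(x, u, w) \<in> S"
    and deriv: "\<And>z. z \<in> S \<Longrightarrow> (f has_derivative blinfun_apply (f' z)) (at z)"
    and J: "\<And>z. z \<in> S \<Longrightarrow> imem (Dx (f' z)) Jx \<and> imem (Du (f' z)) Ju \<and> imem (Dw (f' z)) Jw"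
  obtains Ax Au Aw where "imem Ax Jx" "imem Au Ju" "imem Aw Jw"
    "f (x, u, w) = f (x0, u0, w0) + Ax *v (x - x0) + Au *v (u - u0) + Aw *v (w - w0)"
proof -
  have "\<forall>i. \<exists>z. z \<in> S \<and> f (x, u, w) $ i - f (x0, u0, w0) $ i
      = blinfun_apply (f' z) ((x, u, w) - (x0, u0, w0)) $ i"
    by (metis mean_value_vec_component[OF assms(1-3) deriv])
  then obtain z where z_in: "\<And>i. z i \<in> S" and
    z: "\<And>i. f (x, u, w) $ i - f (x0, u0, w0) $ i = blinfun_apply (f' (z i)) (x - x0, u - u0, w - w0) $ i"
    by (metis minus_prod_def prod.sel)
  define Ax where "Ax = (\<chi> i. Dx (f' (z i)) $ i)"
  define Au where "Au = (\<chi> i. Du (f' (z i)) $ i)"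
  define Aw where "Aw = (\<chi> i. Dw (f' (z i)) $ i)"
  show thesis
  proof
    show "imem Ax Jx" "imem Au Ju" "imem Aw Jw"
      using J[OF z_in] by (auto simp: Ax_def Au_def Aw_def imem_vec_iff)
    show "f (x, u, w) = f (x0, u0, w0) + Ax *v (x - x0) + Au *v (u - u0) + Aw *v (w - w0)"
    proof (subst vec_eq_iff, intro allI)
      fix i
      have "f (x, u, w) $ i = f (x0, u0, w0) $ i
          + (Dx (f' (z i)) *v (x - x0) + Du (f' (z i)) *v (u - u0) + Dw (f' (z i)) *v (w - w0)) $ i"
        using z[of i] by (simp add: blinfun_apply_eq_Dx_Du_Dw)
      then show "f (x, u, w) $ i = (f (x0, u0, w0) + Ax *v (x - x0) + Au *v (u - u0) + Aw *v (w - w0)) $ i"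
        by (simp add: Ax_def Au_def Aw_def matrix_vector_mult_def)
    qed
  qed
qed

lemma matrix_vector_mult_mem_mpos_mneg:
  fixes C :: "real^'n^'p"
  assumes "x \<in> {l..h}"
  shows "C *v x \<in> {mpos C *v l + mneg C *v h .. mneg C *v l + mpos C *v h}"
proof -
  have x: "l $ j \<le> x $ j" "x $ j \<le> h $ j" for j using assms by (auto simp: less_eq_vec_def)
  have entry: "max (C$i$j) 0 * l$j + (C$i$j - max (C$i$j) 0) * h$j \<le> C$i$j * x$j \<and>
      C$i$j * x$j \<le> (C$i$j - max (C$i$j) 0) * l$j + max (C$i$j) 0 * h$j" for i j
    using x[of j] by (cases "C$i$j \<ge> 0") (simp_all add: mult_left_mono mult_left_mono_neg)
  show ?thesis
    by (auto simp: less_eq_vec_def matrix_vector_mult_def mpos_def mneg_def sum.distrib[symmetric]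
        intro!: sum_mono entry[THEN conjunct1] entry[THEN conjunct2])
qed

lemma local_affine_bound_mem:
  assumes "local_affine_bound N l h C dl du" "x \<in> {l..h}"
  shows "N x \<in> {mpos C *v l + mneg C *v h + dl .. mneg C *v l + mpos C *v h + du}"
proof -
  have "C *v x + dl \<le> N x" "N x \<le> C *v x + du"
    using assms unfolding local_affine_bound_def by auto
  with matrix_vector_mult_mem_mpos_mneg[OF assms(2), of C] show ?thesis
    by (auto intro: order.trans add_right_mono)
qed

lemma matrix_inv_matrix_vector_mult:
  fixes T :: "real^'n^'m"
  assumes "invertible T"
  shows "matrix_inv T *v (T *v x) = x"
proof -
  have "matrix_inv T ** T = mat 1"
    using assms unfolding invertible_def matrix_inv_def by (rule someI2_ex) auto
  then show ?thesis by (simp add: matrix_vector_mul_assoc)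
qed

theorem proposition2:
  fixes f :: "(real^'n) \<times> (real^'p) \<times> (real^'q) \<Rightarrow> real^'n"
    and f' :: "(real^'n) \<times> (real^'p) \<times> (real^'q) \<Rightarrow> (((real^'n) \<times> (real^'p) \<times> (real^'q)) \<Rightarrow>\<^sub>L (real^'n))"
    and N :: "real^'n \<Rightarrow> real^'p"
    and T :: "real^'n^'n"
    and lz uz :: "real^'n" and lw uw :: "real^'q"
    and C :: "real^'n^'p" and dl du :: "real^'p"
    and Jx :: "(real^'n^'n) ivl" and Ju :: "(real^'p^'n) ivl" and Jw :: "(real^'q^'n) ivl"
    and x0 :: "real^'n" and w0 :: "real^'q"
    and ly uy :: "real^'n" and C' :: "real^'n^'p" and dl' du' :: "real^'p"
    and y :: "real^'n" and w :: "real^'q"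
  assumes f_deriv: "\<And>z. (f has_derivative blinfun_apply (f' z)) (at z)"
    and f'_cont: "continuous_on UNIV f'"
    and T_inv: "invertible T"
    and bound_N: "local_affine_bound N lz uz C dl du"
    and J_bounds: "\<And>x u w'. x \<in> {lz..uz} \<Longrightarrow>
        u \<in> {mpos C *v lz + mneg C *v uz + dl .. mneg C *v lz + mpos C *v uz + du} \<Longrightarrow>
        w' \<in> {lw..uw} \<Longrightarrow>
        imem (Dx (f' (x, u, w'))) Jx \<and> imem (Du (f' (x, u, w'))) Ju \<and> imem (Dw (f' (x, u, w'))) Jw"
    and x0_in: "x0 \<in> {lz..uz}"
    and w0_in: "w0 \<in> {lw..uw}"
    and bound_N': "local_affine_bound (\<lambda>y. N (matrix_inv T *v y)) ly uy C' dl' du'"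
    and y_box: "{ly..uy} \<subseteq> (\<lambda>x. T *v x) ` {lz..uz}"
    and y_in: "y \<in> {ly..uy}"
    and w_in: "w \<in> {lw..uw}"
  shows "imem (T *v f (matrix_inv T *v y, N (matrix_inv T *v y), w))
    (let u0 = N x0;
         R = iadd (iadd (iadd (ineg (imatvec Jx (pt x0))) (ineg (imatvec Ju (pt u0))))
                         (imatvec Jw (lw - w0, uw - w0)))
                   (pt (f (x0, u0, w0)))
     in iadd (iadd
           (imatvec (pt T) (imatvec (iadd Jx (imatmul Ju (pt (C' ** T))))
                                    (imatvec (pt (matrix_inv T)) (ly, uy))))
           (imatvec (pt T) (imatvec Ju (dl', du'))))
         (imatvec (pt T) R))"
proof -
  obtain x where x_in: "x \<in> {lz..uz}" and y: "y = T *v x" using y_box y_in by blast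
  have Ti_y: "matrix_inv T *v y = x" using matrix_inv_matrix_vector_mult[OF T_inv] y by simp
  define u where "u = N x"
  define u0 where "u0 = N x0"
  define S where "S = {lz..uz} \<times> {mpos C *v lz + mneg C *v uz + dl .. mneg C *v lz + mpos C *v uz + du} \<times> {lw..uw}"
  have S_props: "convex S" "(x0, u0, w0) \<in> S" "(x, u, w) \<in> S"
    using x0_in x_in w0_in w_in local_affine_bound_mem[OF bound_N]
    by (auto simp: S_def u_def u0_def intro!: convex_Times)
  have J_S: "imem (Dx (f' z)) Jx \<and> imem (Du (f' z)) Ju \<and> imem (Dw (f' z)) Jw" if "z \<in> S" for z
    using that J_bounds unfolding S_def by (cases z) simp
  obtain Ax Au Aw where A_in: "imem Ax Jx" "imem Au Ju" "imem Aw Jw" and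
    mvt: "f (x, u, w) = f (x0, u0, w0) + Ax *v (x - x0) + Au *v (u - u0) + Aw *v (w - w0)"
    using mean_value_interval_jacobians[OF S_props f_deriv J_S] .
  define d where "d = u - C' *v y"
  have d_in: "imem d (dl', du')"
    using bound_N' y_in Ti_y unfolding local_affine_bound_def imem_def d_def u_def
    by (auto simp: le_diff_eq diff_le_eq add.commute)
  have T_f: "T *v f (matrix_inv T *v y, N (matrix_inv T *v y), w)
      = T *v ((Ax + Au ** (C' ** T)) *v (matrix_inv T *v y)) + T *v (Au *v d)
        + T *v (- (Ax *v x0) + - (Au *v u0) + Aw *v (w - w0) + f (x0, u0, w0))"
    unfolding Ti_y u_def[symmetric] mvt d_def
    by (simp add: y algebra_simps matrix_vector_mul_assoc[symmetric])
  have "imem y (ly, uy)" "imem (w - w0) (lw - w0, uw - w0)"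
    using y_in w_in by (auto simp: imem_def)
  then show ?thesis
    unfolding Let_def u0_def[symmetric] T_f
    by (intro imem_iadd imem_ineg imem_imatvec imem_imatmul imem_pt A_in d_in)
qed

end
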